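(* In the linear setting described in the context, for every $1\le t\le T$, $$\|\overline{\mathbf q}_t-\mathbf x_t\|_2^2\le\|\boldsymbol\theta_{t-1}\cdots\boldsymbol\theta_0\|_2^2\Big(\alpha^{2t}\|\mathbf z^\perp\|_2^2+\|\mathbf z^\parallel\|_2^2+\gamma_t\|\mathbf z\|_2^2\big(\gamma_t\alpha^2(1-\alpha^{t-1})^2+2(\alpha-\alpha^t)\big)\Big),$$ where $\gamma_t=\max_{0\le s\le t}\big(1+\kappa(\overline{\boldsymbol\theta}_s)^2\big)\|\mathbf I-\overline{\boldsymbol\theta}_s^T\overline{\boldsymbol\theta}_s\|_2$ with $\overline{\boldsymbol\theta}_0=\mathbf I$ and $\overline{\boldsymbol\theta}_s=\boldsymbol\theta_{s-1}\cdots\boldsymbol\theta_0$. Moreover, if all $\boldsymbol\theta_t$ are orthogonal matrices, then $$\|\overline{\mathbf q}_t-\mathbf x_t\|_2^2=\alpha^{2t}\|\mathbf z^\perp\|_2^2+\|\mathbf z^\parallel\|_2^2.$$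
   Context: Linear setting: fix integers $1\le r\le d$, $T\ge1$, a control regularization constant $c>0$, and $\alpha=\frac{c}{1+c}$. For $t=0,\dots,T$, $Z^t\subset\mathbb{R}^d$ is an $r$-dimensional linear subspace (the tangent space of the $t$-th embedding manifold), $\mathbf P_t$ is the orthogonal projection onto $Z^t$, $\mathbf Q_t=\mathbf I-\mathbf P_t$, and $\mathbf K_t=(c\mathbf I+\mathbf Q_t^T\mathbf Q_t)^{-1}\mathbf Q_t^T\mathbf Q_t$. For $t=0,\dots,T-1$, $\boldsymbol\theta_t\in\mathbb{R}^{d\times d}$ is invertible with $\boldsymbol\theta_tZ^t=Z^{t+1}$. The clean trajectory is $\mathbf x_0\in Z^0$, $\mathbf x_{t+1}=\boldsymbol\theta_t\mathbf x_t$. Given a perturbation $\mathbf z\in\mathbb{R}^d$, write $\mathbf z^\parallel=\mathbf P_0\mathbf z$ and $\mathbf z^\perp=\mathbf z-\mathbf P_0\mathbf z$; the controlled perturbed trajectory is $\overline{\mathbf q}_0=\mathbf x_0+\mathbf z$, $\overline{\mathbf q}_{t+1}=\boldsymbol\theta_t(\mathbf I-\mathbf K_t)\overline{\mathbf q}_t$ (i.e. $\overline{\mathbf q}_{t+1}=\boldsymbol\theta_t(\overline{\mathbf q}_t+\mathbf u_t)$ with the feedback control $\mathbf u_t=-\mathbf K_t\overline{\mathbf q}_t$ minimizing $\frac12\|\mathbf Q_t(\overline{\mathbf q}_t+\mathbf u)\|_2^2+\frac c2\|\mathbf u\|_2^2$). $\|\cdot\|_2$ is the Euclidean norm on vectors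 and the spectral norm on matrices; $\kappa(\mathbf A)=\|\mathbf A\|_2\|\mathbf A^{-1}\|_2$. *)

theory Defs
  imports "HOL-Analysis.Analysis"
begin

definition orth_proj :: "(real^'n) set \<Rightarrow> real^'n \<Rightarrow> real^'n" where
  "orth_proj Z x = (THE y. y \<in> Z \<and> (\<forall>w\<in>Z. (x - y) \<bullet> w = 0))"

definition projP :: "(real^'n) set \<Rightarrow> real^'n^'n" where
  "projP Z = matrix (orth_proj Z)"

definition projQ :: "(real^'n) set \<Rightarrow> real^'n^'n" where
  "projQ Z = mat 1 - projP Z"

definition gainK :: "real \<Rightarrow> (real^'n) set \<Rightarrow> real^'n^'n" where
  "gainK c Z = matrix_inv (c *\<^sub>R mat 1 + transpose (projQ Z) ** projQ Z)
                 ** (transpose (projQ Z) ** projQ Z)"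

definition specnorm :: "real^'n^'m \<Rightarrow> real" where
  "specnorm A = onorm (\<lambda>x. A *v x)"

definition cond_num :: "real^'n^'n \<Rightarrow> real" where
  "cond_num A = specnorm A * specnorm (matrix_inv A)"

primrec thbar :: "(nat \<Rightarrow> real^'n^'n) \<Rightarrow> nat \<Rightarrow> real^'n^'n" where
  "thbar \<theta> 0 = mat 1"
| "thbar \<theta> (Suc s) = \<theta> s ** thbar \<theta> s"

definition gamma :: "(nat \<Rightarrow> real^'n^'n) \<Rightarrow> nat \<Rightarrow> real" where
  "gamma \<theta> t = Max ((\<lambda>s. (1 + (cond_num (thbar \<theta> s))\<^sup>2) *
       specnorm (mat 1 - transpose (thbar \<theta> s) ** thbar \<theta> s)) ` {0..t})"

end

theory Submission
  imports Defs
begin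

text \<open>
  Since Q_t is a symmetric idempotent, K_t = beta Q_t with beta = 1/(1+c) = 1 - alpha, so the error
  e_t = q_t - x_t obeys e_{t+1} = theta_t (e_t - beta Q_t e_t). Pulled back along thetabar_t, the
  tangential part z^par stays put and the normal part is damped by alpha in every step; this is exact
  when thetabar_t is orthogonal. In general, projecting thetabar_t v with v orthogonal to Z_0 onto
  Z_t = thetabar_t Z_0 gives thetabar_t p with p in Z_0 and |p| <= (1 + kappa^2) ||I - thetabar_t^T thetabar_t|| |v|,
  since a near-isometry nearly preserves right angles. These leaks accumulate to a tangential drift of
  norm at most gamma_t alpha (1 - alpha^(t-1)) |z^perp|, and expanding
  |thetabar_t (z^par + alpha^t z^perp + drift)|^2 gives the bound.
\<close>

lemma specnorm_mult_vector: "norm (A *v x) \<le> specnorm A * norm x"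
  unfolding specnorm_def by (rule onorm) simp

lemma specnorm_nonneg: "0 \<le> specnorm A"
  unfolding specnorm_def by (rule onorm_pos_le) simp

lemma specnorm_zero [simp]: "specnorm (0 :: real^'n^'m) = 0"
  by (simp add: specnorm_def onorm_zero)

lemma power2_specnorm_le_bound:
  assumes "0 \<le> k" and "\<And>x. (norm (A *v x))\<^sup>2 \<le> k * (norm x)\<^sup>2"
  shows "(specnorm (A :: real^'n^'m))\<^sup>2 \<le> k"
proof -
  have "norm (A *v x) \<le> sqrt k * norm x" for x
    using real_le_rsqrt[OF assms(2)] by (simp add: real_sqrt_mult)
  then have "specnorm A \<le> sqrt k"
    unfolding specnorm_def by (rule onorm_le)
  then have "(specnorm A)\<^sup>2 \<le> (sqrt k)\<^sup>2"
    by (rule power_mono[OF _ specnorm_nonneg])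
  with assms(1) show ?thesis
    by simp
qed

lemma matrix_inv_right: "invertible (A :: real^'n^'n) \<Longrightarrow> A ** matrix_inv A = mat 1"
  and matrix_inv_left: "invertible (A :: real^'n^'n) \<Longrightarrow> matrix_inv A ** A = mat 1"
  unfolding invertible_def matrix_inv_def by (metis (mono_tags, lifting) someI_ex)+

lemma matrix_inv_unique:
  assumes "(A :: real^'n^'n) ** B = mat 1" and "B ** A = mat 1"
  shows "matrix_inv A = B"
proof -
  have "invertible A"
    using assms unfolding invertible_def by blast
  then have "matrix_inv A = (matrix_inv A ** A) ** B"
    by (metis assms(1) matrix_mul_assoc matrix_mul_rid)
  then show ?thesis
    by (simp add: matrix_inv_left \<open>invertible A\<close>)
qed

lemma norm_le_specnorm_inv:
  assumes "invertible A"
  shows "norm x \<le> specnorm (matrix_inv A) * norm ((A :: real^'n^'n) *v x)"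
proof -
  have "x = matrix_inv A *v (A *v x)"
    by (simp add: matrix_vector_mul_assoc matrix_inv_left[OF assms])
  then show ?thesis
    by (metis specnorm_mult_vector)
qed

section \<open>Orthogonal projection and the feedback gain\<close>

lemma orth_proj_exists_unique:
  fixes S :: "(real^'n) set"
  assumes "subspace S"
  shows "\<exists>!y. y \<in> S \<and> (\<forall>w\<in>S. (x - y) \<bullet> w = 0)"
proof -
  obtain y z where "y \<in> span S" and "\<And>w. w \<in> span S \<Longrightarrow> orthogonal z w" and "x = y + z"
    using orthogonal_subspace_decomp_exists[of S x] by blast
  moreover have "span S = S"
    using assms by (simp add: span_eq_iff)
  ultimately have ex: "y \<in> S \<and> (\<forall>w\<in>S. (x - y) \<bullet> w = 0)"
    by (simp add: orthogonal_def)
  show ?thesis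
  proof (rule ex1I[of _ y])
    fix y' assume y': "y' \<in> S \<and> (\<forall>w\<in>S. (x - y') \<bullet> w = 0)"
    then have "y' - y \<in> S"
      using ex assms by (simp add: subspace_diff)
    then have "(y' - y) \<bullet> (y' - y) = (x - y) \<bullet> (y' - y) - (x - y') \<bullet> (y' - y)"
      by (simp add: inner_diff_left)
    also have "\<dots> = 0"
      using \<open>y' - y \<in> S\<close> y' ex by simp
    finally show "y' = y"
      by simp
  qed (fact ex)
qed

lemma
  assumes "subspace S"
  shows orth_proj_in: "orth_proj S x \<in> S"
    and orth_proj_orthogonal: "w \<in> S \<Longrightarrow> (x - orth_proj S x) \<bullet> w = 0"
  using theI'[OF orth_proj_exists_unique[OF assms, of x]] unfolding orth_proj_def by blast+

lemma orth_proj_unique: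
  assumes "subspace S" and "y \<in> S" and "\<And>w. w \<in> S \<Longrightarrow> (x - y) \<bullet> w = 0"
  shows "orth_proj S x = y"
  unfolding orth_proj_def
  using assms by (intro the1_equality[OF orth_proj_exists_unique]) auto

lemma orth_proj_id: "subspace S \<Longrightarrow> y \<in> S \<Longrightarrow> orth_proj S y = y"
  by (rule orth_proj_unique) auto

lemma orth_proj_residual: "subspace S \<Longrightarrow> orth_proj S (x - orth_proj S x) = 0"
  by (rule orth_proj_unique) (auto simp: orth_proj_orthogonal subspace_0)

lemma linear_orth_proj:
  assumes "subspace S"
  shows "linear (orth_proj S)"
proof
  fix a b
  have "(a + b - (orth_proj S a + orth_proj S b)) \<bullet> w = 0" if "w \<in> S" for w
    using orth_proj_orthogonal[OF assms that] by (simp add: inner_diff_left inner_add_left)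
  then show "orth_proj S (a + b) = orth_proj S a + orth_proj S b"
    by (intro orth_proj_unique assms subspace_add orth_proj_in)
next
  fix k a
  have "(k *\<^sub>R a - k *\<^sub>R orth_proj S a) \<bullet> w = 0" if "w \<in> S" for w
    using orth_proj_orthogonal[OF assms that] by (simp add: scaleR_diff_right[symmetric])
  then show "orth_proj S (k *\<^sub>R a) = k *\<^sub>R orth_proj S a"
    by (intro orth_proj_unique assms subspace_scale orth_proj_in)
qed

lemma orth_proj_inner_commute:
  assumes "subspace S"
  shows "orth_proj S x \<bullet> y = x \<bullet> orth_proj S y"
proof -
  have "orth_proj S x \<bullet> (y - orth_proj S y) = 0" "(x - orth_proj S x) \<bullet> orth_proj S y = 0"
    using orth_proj_orthogonal[OF assms] orth_proj_in[OF assms] by (auto simp: inner_commute)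
  then show ?thesis
    by (simp add: inner_diff_left inner_diff_right)
qed

lemma projP_mult_vector: "subspace S \<Longrightarrow> projP S *v x = orth_proj S x"
  unfolding projP_def by (simp add: linear_orth_proj matrix_works)

lemma projQ_mult_vector: "subspace S \<Longrightarrow> projQ S *v x = x - orth_proj S x"
  unfolding projQ_def by (simp add: matrix_vector_mult_diff_rdistrib projP_mult_vector)

lemma transpose_projQ_mult_projQ:
  assumes "subspace S"
  shows "transpose (projQ S) ** projQ S = projQ S"
proof -
  have "y v* projQ S = projQ S *v y" for y
  proof (rule vector_eq_rdot[THEN iffD1], intro allI)
    fix u
    show "(y v* projQ S) \<bullet> u = (projQ S *v y) \<bullet> u"
      using orth_proj_inner_commute[OF assms, of y u]
      by (simp add: dot_lmul_matrix projQ_mult_vector[OF assms] inner_diff_left inner_diff_right)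
  qed
  moreover have "projQ S *v (projQ S *v x) = projQ S *v x" for x
    using orth_proj_residual[OF assms] by (simp add: projQ_mult_vector[OF assms])
  ultimately show ?thesis
    by (simp add: matrix_eq flip: matrix_vector_mul_assoc)
qed

lemma matrix_inv_scaleR_id_plus_idempotent:
  fixes Q :: "real^'n^'n"
  assumes Q: "Q ** Q = Q" and c: "c > 0"
  shows "matrix_inv (c *\<^sub>R mat 1 + Q) = (1 / c) *\<^sub>R (mat 1 - (1 / (1 + c)) *\<^sub>R Q)"
proof (rule matrix_inv_unique)
  define \<beta> where "\<beta> = 1 / (1 + c)"
  let ?X = "(1 / c) *\<^sub>R (mat 1 - \<beta> *\<^sub>R Q)"
  have "c + c * c > 0"
    using c by (simp add: add_pos_pos)
  then have \<beta>: "(1 - \<beta>) / c = \<beta>"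
    using c by (simp add: \<beta>_def field_simps)
  have M: "(c *\<^sub>R mat 1 + Q) *v y = c *\<^sub>R y + Q *v y" for y
    by (simp add: matrix_vector_mult_add_rdistrib flip: scaleR_matrix_vector_assoc)
  have X: "?X *v y = (1 / c) *\<^sub>R (y - \<beta> *\<^sub>R (Q *v y))" for y
    by (simp add: matrix_vector_mult_diff_rdistrib flip: scaleR_matrix_vector_assoc)
  have QQ: "Q *v (Q *v y) = Q *v y" for y
    by (simp add: matrix_vector_mul_assoc Q)
  have QX: "Q *v (?X *v y) = \<beta> *\<^sub>R (Q *v y)" for y
  proof -
    have "Q *v (?X *v y) = ((1 - \<beta>) / c) *\<^sub>R (Q *v y)"
      unfolding X
      by (simp add: QQ matrix_vector_mult_diff_distrib matrix_vector_mult_scaleR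
          scaleR_diff_right diff_divide_distrib scaleR_diff_left)
    then show ?thesis
      by (simp only: \<beta>)
  qed
  have "c *\<^sub>R (?X *v y) + Q *v (?X *v y) = y" for y
    unfolding QX unfolding X using c by (simp add: scaleR_diff_right)
  moreover have "?X *v (c *\<^sub>R y + Q *v y) = y" for y
  proof -
    have "?X *v (c *\<^sub>R y + Q *v y) = c *\<^sub>R (?X *v y) + ?X *v (Q *v y)"
      by (simp add: matrix_vector_right_distrib matrix_vector_mult_scaleR)
    also have "?X *v (Q *v y) = Q *v (?X *v y)"
      by (simp add: X QX QQ \<beta> matrix_vector_mult_diff_distrib matrix_vector_mult_scaleR
          flip: scaleR_diff_left)
    finally show ?thesis
      using \<open>c *\<^sub>R (?X *v y) + Q *v (?X *v y) = y\<close> by simp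
  qed
  ultimately show "(c *\<^sub>R mat 1 + Q) ** ?X = mat 1" and "?X ** (c *\<^sub>R mat 1 + Q) = mat 1"
    by (simp_all add: matrix_eq M flip: matrix_vector_mul_assoc)
qed

lemma gainK_mult_vector:
  assumes "subspace S" and "c > 0"
  shows "gainK c S *v x = (1 / (1 + c)) *\<^sub>R (x - orth_proj S x)"
proof -
  have QQ: "projQ S ** projQ S = projQ S"
    by (metis assms(1) matrix_transpose_mul transpose_projQ_mult_projQ transpose_transpose)
  have QQv: "projQ S *v (projQ S *v x) = projQ S *v x"
    by (simp add: matrix_vector_mul_assoc QQ)
  have "gainK c S *v x = (1 / c) *\<^sub>R (projQ S *v x - (1 / (1 + c)) *\<^sub>R (projQ S *v x))"
    by (simp add: gainK_def transpose_projQ_mult_projQ[OF assms(1)]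
        matrix_inv_scaleR_id_plus_idempotent[OF QQ assms(2)] matrix_vector_mult_diff_rdistrib
        QQv flip: scaleR_matrix_vector_assoc matrix_vector_mul_assoc)
  also have "\<dots> = (1 / (1 + c)) *\<^sub>R (projQ S *v x)"
    using assms(2) add_pos_pos[of c "c * c"] by (simp add: field_simps flip: scaleR_diff_left)
  finally show ?thesis
    by (simp add: projQ_mult_vector[OF assms(1)])
qed

section \<open>Near-isometries nearly preserve orthogonality\<close>

definition distortion :: "real^'n^'n \<Rightarrow> real" where
  "distortion A = (1 + (cond_num A)\<^sup>2) * specnorm (mat 1 - transpose A ** A)"

lemma distortion_nonneg: "0 \<le> distortion A"
  by (simp add: distortion_def specnorm_nonneg)

lemma distortion_orthogonal: "orthogonal_matrix A \<Longrightarrow> distortion A = 0"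
  by (simp add: distortion_def orthogonal_matrix)

lemma inner_transpose_mult_self: "x \<bullet> ((transpose A ** A) *v x) = (norm ((A :: real^'n^'m) *v x))\<^sup>2"
proof -
  have "x \<bullet> ((transpose A ** A) *v x) = ((A *v x) v* A) \<bullet> x"
    by (simp add: inner_commute transpose_matrix_vector flip: matrix_vector_mul_assoc)
  then show ?thesis
    by (simp add: dot_lmul_matrix power2_norm_eq_inner)
qed

lemma abs_power2_norm_diff_le:
  fixes A :: "real^'n^'n"
  shows "\<bar>(norm x)\<^sup>2 - (norm (A *v x))\<^sup>2\<bar> \<le> specnorm (mat 1 - transpose A ** A) * (norm x)\<^sup>2"
proof -
  let ?M = "mat 1 - transpose A ** A"
  have "\<bar>(norm x)\<^sup>2 - (norm (A *v x))\<^sup>2\<bar> = \<bar>x \<bullet> (?M *v x)\<bar>"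
    by (simp add: matrix_vector_mult_diff_rdistrib inner_diff_right inner_transpose_mult_self
        power2_norm_eq_inner)
  also have "\<dots> \<le> norm x * norm (?M *v x)"
    by (rule Cauchy_Schwarz_ineq2)
  also have "\<dots> \<le> norm x * (specnorm ?M * norm x)"
    by (simp add: mult_left_mono specnorm_mult_vector)
  finally show ?thesis
    by (simp add: power2_eq_square mult_ac)
qed

lemma power2_specnorm_le_one_plus:
  fixes A :: "real^'n^'n"
  shows "(specnorm A)\<^sup>2 \<le> 1 + specnorm (mat 1 - transpose A ** A)"
proof (rule power2_specnorm_le_bound)
  show "0 \<le> 1 + specnorm (mat 1 - transpose A ** A)"
    by (simp add: add_nonneg_nonneg specnorm_nonneg)
  show "(norm (A *v x))\<^sup>2 \<le> (1 + specnorm (mat 1 - transpose A ** A)) * (norm x)\<^sup>2" for x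
    using abs_power2_norm_diff_le[of x A] by (simp add: algebra_simps abs_le_iff)
qed

lemma power2_specnorm_inv_le:
  fixes A :: "real^'n^'n"
  assumes "invertible A"
  shows "(specnorm (matrix_inv A))\<^sup>2 * (1 - specnorm (mat 1 - transpose A ** A)) \<le> 1"
proof (cases "specnorm (mat 1 - transpose A ** A) < 1")
  case True
  define d where "d = specnorm (mat 1 - transpose A ** A)"
  have "(norm (matrix_inv A *v y))\<^sup>2 \<le> 1 / (1 - d) * (norm y)\<^sup>2" for y
  proof -
    have "A *v (matrix_inv A *v y) = y"
      by (simp add: matrix_vector_mul_assoc matrix_inv_right[OF assms])
    then have "(1 - d) * (norm (matrix_inv A *v y))\<^sup>2 \<le> (norm y)\<^sup>2"
      using abs_power2_norm_diff_le[of "matrix_inv A *v y" A] by (simp add: d_def algebra_simps)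
    then show ?thesis
      using True by (simp add: d_def field_simps)
  qed
  then have "(specnorm (matrix_inv A))\<^sup>2 \<le> 1 / (1 - d)"
    using True by (intro power2_specnorm_le_bound) (simp_all add: d_def)
  then show ?thesis
    using True by (simp add: d_def field_simps)
next
  case False
  then have "(specnorm (matrix_inv A))\<^sup>2 * (1 - specnorm (mat 1 - transpose A ** A)) \<le> 0"
    by (simp add: mult_nonneg_nonpos)
  then show ?thesis
    by simp
qed

lemma one_le_cond_num:
  fixes A :: "real^'n^'n"
  assumes "invertible A"
  shows "1 \<le> cond_num A"
proof -
  let ?e = "axis undefined 1 :: real^'n"
  have "1 \<le> specnorm (matrix_inv A) * norm (A *v ?e)"
    using norm_le_specnorm_inv[OF assms, of ?e] by simp
  also have "\<dots> \<le> specnorm (matrix_inv A) * specnorm A"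
    using specnorm_mult_vector[of A ?e] by (simp add: mult_left_mono specnorm_nonneg)
  finally show ?thesis
    by (simp add: cond_num_def mult.commute)
qed

lemma power2_cond_num_le_distortion:
  fixes A :: "real^'n^'n"
  assumes "invertible A"
  shows "(cond_num A)\<^sup>2 - 1 \<le> 2 * distortion A"
proof -
  define d where "d = specnorm (mat 1 - transpose A ** A)"
  define X where "X = (specnorm A)\<^sup>2"
  define Y where "Y = (specnorm (matrix_inv A))\<^sup>2"
  have \<kappa>: "(cond_num A)\<^sup>2 = X * Y"
    by (simp add: X_def Y_def cond_num_def power_mult_distrib)
  have dist: "distortion A = (1 + X * Y) * d"
    by (simp add: distortion_def \<kappa> d_def)
  have "1 \<le> X * Y"
    using one_le_cond_num[OF assms] by (simp flip: \<kappa>)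
  show ?thesis
  proof (cases "d < 1 / 2")
    case True
    have "0 \<le> d"
      by (simp add: d_def specnorm_nonneg)
    have "Y * (1 - d) \<le> 1"
      using power2_specnorm_inv_le[OF assms] by (simp add: Y_def d_def)
    then have "Y \<le> 1 / (1 - d)"
      using True by (simp add: field_simps)
    have "X * Y \<le> (1 + d) * Y"
      using power2_specnorm_le_one_plus[of A] by (simp add: X_def Y_def d_def mult_right_mono)
    also have "\<dots> \<le> (1 + d) * (1 / (1 - d))"
      using \<open>Y \<le> 1 / (1 - d)\<close> \<open>0 \<le> d\<close> by (intro mult_left_mono) simp_all
    finally have "X * Y - 1 \<le> 2 * d / (1 - d)"
      using True by (simp add: field_simps)
    also have "\<dots> \<le> 4 * d"
      using True \<open>0 \<le> d\<close> mult_left_mono[of "2 * d" 1 d] by (simp add: field_simps)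
    also have "\<dots> \<le> 2 * (1 + X * Y) * d"
      using \<open>1 \<le> X * Y\<close> \<open>0 \<le> d\<close> by (simp add: mult_right_mono)
    finally show ?thesis
      unfolding \<kappa> dist by (simp only: mult.assoc)
  next
    case False
    then have "(1 + X * Y) * 1 \<le> (1 + X * Y) * (2 * d)"
      using \<open>1 \<le> X * Y\<close> by (intro mult_left_mono) simp_all
    then show ?thesis
      unfolding \<kappa> dist by (simp add: algebra_simps)
  qed
qed

lemma inner_orthonormal_image_le:
  fixes A :: "real^'n^'n"
  assumes "invertible A" and "u \<bullet> w = 0" and "norm u = 1" and "norm w = 1"
  shows "2 * (specnorm (matrix_inv A))\<^sup>2 * ((A *v u) \<bullet> (A *v w)) \<le> (cond_num A)\<^sup>2 - 1"
proof -
  let ?N = "specnorm A" and ?Ni = "specnorm (matrix_inv A)"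
  have "u \<bullet> u = 1" "w \<bullet> w = 1"
    using assms(3,4) by (simp_all flip: power2_norm_eq_inner)
  then have sum_diff: "(norm (u + w))\<^sup>2 = 2" "(norm (u - w))\<^sup>2 = 2"
    using assms(2)
    by (simp_all add: power2_norm_eq_inner inner_add_left inner_add_right inner_diff_left
        inner_diff_right inner_commute)
  have polar: "4 * ((A *v u) \<bullet> (A *v w)) = (norm (A *v (u + w)))\<^sup>2 - (norm (A *v (u - w)))\<^sup>2"
    by (simp add: matrix_vector_right_distrib matrix_vector_mult_diff_distrib power2_norm_eq_inner
        inner_add_left inner_add_right inner_diff_left inner_diff_right inner_commute)
  have "(norm (A *v (u + w)))\<^sup>2 \<le> ?N\<^sup>2 * 2"
    using power_mono[OF specnorm_mult_vector[of A "u + w"] norm_ge_zero, of 2] sum_diff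
    by (simp add: power_mult_distrib)
  then have "?Ni\<^sup>2 * (norm (A *v (u + w)))\<^sup>2 \<le> ?Ni\<^sup>2 * (?N\<^sup>2 * 2)"
    by (rule mult_left_mono) simp
  moreover have "2 \<le> ?Ni\<^sup>2 * (norm (A *v (u - w)))\<^sup>2"
    using power_mono[OF norm_le_specnorm_inv[OF assms(1), of "u - w"] norm_ge_zero, of 2] sum_diff
    by (simp add: power_mult_distrib)
  ultimately have "?Ni\<^sup>2 * (4 * ((A *v u) \<bullet> (A *v w))) \<le> ?Ni\<^sup>2 * (?N\<^sup>2 * 2) - 2"
    unfolding polar right_diff_distrib by linarith
  then show ?thesis
    by (simp add: cond_num_def power_mult_distrib algebra_simps)
qed

lemma norm_le_distortion_mult_norm:
  fixes A :: "real^'n^'n"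
  assumes "invertible A" and "v \<bullet> p = 0" and "(A *v v - A *v p) \<bullet> (A *v p) = 0"
  shows "norm p \<le> distortion A * norm v"
proof (cases "p = 0 \<or> v = 0")
  case True
  moreover have "v = 0 \<Longrightarrow> p = 0"
    using assms(3) norm_le_specnorm_inv[OF assms(1), of p]
    by (simp add: inner_minus_left power2_norm_eq_inner[symmetric])
  ultimately show ?thesis
    by (auto simp: distortion_nonneg)
next
  case False
  let ?Ni = "specnorm (matrix_inv A)" and ?\<kappa> = "cond_num A"
  define u where "u = (1 / norm v) *\<^sub>R v"
  define w where "w = (1 / norm p) *\<^sub>R p"
  have unit: "norm u = 1" "norm w = 1" and "u \<bullet> w = 0"
    using False assms(2) by (simp_all add: u_def w_def)
  have "(norm p)\<^sup>2 \<le> ?Ni\<^sup>2 * (norm (A *v p))\<^sup>2"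
    using power_mono[OF norm_le_specnorm_inv[OF assms(1), of p] norm_ge_zero, of 2]
    by (simp add: power_mult_distrib)
  also have "(norm (A *v p))\<^sup>2 = norm v * norm p * ((A *v u) \<bullet> (A *v w))"
    using assms(3) False
    by (simp add: u_def w_def matrix_vector_mult_scaleR inner_diff_left power2_norm_eq_inner)
  also have "?Ni\<^sup>2 * (norm v * norm p * ((A *v u) \<bullet> (A *v w)))
      = (norm v * norm p / 2) * (2 * ?Ni\<^sup>2 * ((A *v u) \<bullet> (A *v w)))"
    by (simp add: field_simps)
  also have "\<dots> \<le> (norm v * norm p / 2) * (?\<kappa>\<^sup>2 - 1)"
    using inner_orthonormal_image_le[OF assms(1) \<open>u \<bullet> w = 0\<close> unit] by (rule mult_left_mono) simp
  finally have "norm p * norm p \<le> norm p * (norm v * ((?\<kappa>\<^sup>2 - 1) / 2))"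
    by (simp add: power2_eq_square field_simps)
  then have "norm p \<le> norm v * ((?\<kappa>\<^sup>2 - 1) / 2)"
    using False by simp
  also have "\<dots> \<le> norm v * (distortion A)"
    using power2_cond_num_le_distortion[OF assms(1)] by (intro mult_left_mono) simp_all
  finally show ?thesis
    by (simp add: mult.commute)
qed

lemma power2_norm_orthogonal_matrix:
  "orthogonal_matrix (A :: real^'n^'n) \<Longrightarrow> (norm (A *v x))\<^sup>2 = (norm x)\<^sup>2"
  using abs_power2_norm_diff_le[of x A] by (simp add: orthogonal_matrix)

lemma orth_proj_image_decomposition:
  fixes A :: "real^'n^'n"
  assumes S: "subspace S" and A: "invertible A" and "u \<in> S" and v: "\<And>w. w \<in> S \<Longrightarrow> v \<bullet> w = 0"
  shows "\<exists>p\<in>S. orth_proj ((\<lambda>y. A *v y) ` S) (A *v (u + v)) = A *v (u + p)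
           \<and> norm p \<le> distortion A * norm v"
proof -
  let ?T = "(\<lambda>y. A *v y) ` S"
  have T: "subspace ?T"
    using S by (intro linear_subspace_image) (simp add: matrix_vector_mul_linear)
  obtain p where "p \<in> S" and p: "orth_proj ?T (A *v v) = A *v p"
    using orth_proj_in[OF T, of "A *v v"] by blast
  have "orth_proj ?T (A *v (u + v)) = A *v u + orth_proj ?T (A *v v)"
    using \<open>u \<in> S\<close> linear_orth_proj[OF T]
    by (simp add: matrix_vector_right_distrib linear_add orth_proj_id[OF T])
  moreover have "norm p \<le> distortion A * norm v"
  proof (rule norm_le_distortion_mult_norm[OF A])
    show "v \<bullet> p = 0"
      using v \<open>p \<in> S\<close> .
    show "(A *v v - A *v p) \<bullet> (A *v p) = 0"
      using orth_proj_orthogonal[OF T, of "A *v p" "A *v v"] \<open>p \<in> S\<close> by (simp add: p)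
  qed
  ultimately show ?thesis
    using \<open>p \<in> S\<close> p by (auto simp: matrix_vector_right_distrib)
qed

section \<open>The controlled error dynamics\<close>

lemma invertible_thbar: "(\<And>s. s < t \<Longrightarrow> invertible (\<theta> s)) \<Longrightarrow> invertible (thbar \<theta> t)"
proof (induction t)
  case 0
  show ?case
    unfolding invertible_def by (auto intro: exI[of _ "mat 1"])
qed (simp add: invertible_mult)

lemma orthogonal_matrix_thbar:
  "(\<And>s. s < t \<Longrightarrow> orthogonal_matrix (\<theta> s)) \<Longrightarrow> orthogonal_matrix (thbar \<theta> t)"
  by (induction t) (simp_all add: orthogonal_matrix_id orthogonal_matrix_mul)

lemma thbar_image:
  assumes "\<And>s. s < t \<Longrightarrow> (\<lambda>v. \<theta> s *v v) ` Z s = Z (Suc s)"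
  shows "Z t = (\<lambda>v. thbar \<theta> t *v v) ` Z 0"
  using assms
proof (induction t)
  case (Suc t)
  then have "Z (Suc t) = (\<lambda>v. \<theta> t *v v) ` (\<lambda>v. thbar \<theta> t *v v) ` Z 0"
    by (metis less_SucI lessI)
  then show ?case
    by (simp add: image_image matrix_vector_mul_assoc)
qed simp

lemma thbar_trajectory:
  fixes x :: "nat \<Rightarrow> real^'n"
  shows "(\<And>s. s < t \<Longrightarrow> x (Suc s) = \<theta> s *v x s) \<Longrightarrow> x t = thbar \<theta> t *v x 0"
  by (induction t) (simp_all add: matrix_vector_mul_assoc)

lemma distortion_thbar_le_gamma: "s \<le> t \<Longrightarrow> distortion (thbar \<theta> s) \<le> gamma \<theta> t"
  unfolding gamma_def distortion_def by (intro Max_ge) auto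

text \<open>
  The s = 0 term vanishes because thbar 0 = I; this is where the exponent t - 1 comes from
  (for t = 0 it truncates to 0 and both sides are 0).
\<close>

lemma drift_sum_le_gamma:
  assumes "0 \<le> \<alpha>" "\<alpha> \<le> 1"
  shows "(\<Sum>s<t. (1 - \<alpha>) * distortion (thbar \<theta> s) * \<alpha> ^ s) \<le> gamma \<theta> t * \<alpha> * (1 - \<alpha> ^ (t - 1))"
proof (cases t)
  case (Suc n)
  have "(\<Sum>s<t. (1 - \<alpha>) * distortion (thbar \<theta> s) * \<alpha> ^ s)
      = (\<Sum>s<n. (1 - \<alpha>) * distortion (thbar \<theta> (Suc s)) * \<alpha> ^ Suc s)"
    unfolding Suc sum.lessThan_Suc_shift by (simp add: distortion_orthogonal orthogonal_matrix_id)
  also have "\<dots> \<le> (\<Sum>s<n. (1 - \<alpha>) * gamma \<theta> t * \<alpha> ^ Suc s)"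
  proof (intro sum_mono mult_right_mono mult_left_mono)
    fix s assume "s \<in> {..<n}"
    with Suc show "distortion (thbar \<theta> (Suc s)) \<le> gamma \<theta> t"
      by (intro distortion_thbar_le_gamma) simp
  qed (use assms in simp_all)
  also have "\<dots> = gamma \<theta> t * \<alpha> * ((1 - \<alpha>) * (\<Sum>s<n. \<alpha> ^ s))"
    by (simp add: sum_distrib_left mult_ac)
  finally show ?thesis
    by (simp add: Suc one_diff_power_eq)
qed simp

lemma damped_projection_step:
  fixes A :: "real^'n^'n" and k :: real
  assumes S: "subspace S" and A: "invertible A" and "zp \<in> S" "e \<in> S"
    and zq: "\<And>w. w \<in> S \<Longrightarrow> zq \<bullet> w = 0" and \<alpha>: "\<alpha> \<le> 1"
  defines "y \<equiv> A *v (zp + k *\<^sub>R zq + e)"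
  shows "\<exists>e'\<in>S. y - (1 - \<alpha>) *\<^sub>R (y - orth_proj ((\<lambda>v. A *v v) ` S) y) = A *v (zp + (\<alpha> * k) *\<^sub>R zq + e')
           \<and> norm e' \<le> norm e + (1 - \<alpha>) * distortion A * (\<bar>k\<bar> * norm zq)"
proof -
  define u where "u = zp + e"
  have "u \<in> S"
    using S \<open>zp \<in> S\<close> \<open>e \<in> S\<close> by (simp add: u_def subspace_add)
  obtain p where "p \<in> S" and p: "orth_proj ((\<lambda>v. A *v v) ` S) (A *v (u + k *\<^sub>R zq)) = A *v (u + p)"
      and np: "norm p \<le> distortion A * norm (k *\<^sub>R zq)"
    using orth_proj_image_decomposition[OF S A \<open>u \<in> S\<close>, of "k *\<^sub>R zq"] zq by auto
  have "y = A *v (u + k *\<^sub>R zq)"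
    by (simp add: y_def u_def algebra_simps)
  then have "y - (1 - \<alpha>) *\<^sub>R (y - orth_proj ((\<lambda>v. A *v v) ` S) y)
      = A *v ((u + k *\<^sub>R zq) - (1 - \<alpha>) *\<^sub>R ((u + k *\<^sub>R zq) - (u + p)))"
    by (simp only: p matrix_vector_mult_diff_distrib matrix_vector_mult_scaleR)
  also have "\<dots> = A *v (zp + (\<alpha> * k) *\<^sub>R zq + (e + (1 - \<alpha>) *\<^sub>R p))"
    by (simp add: u_def algebra_simps)
  moreover have "e + (1 - \<alpha>) *\<^sub>R p \<in> S"
    using S \<open>e \<in> S\<close> \<open>p \<in> S\<close> by (simp add: subspace_add subspace_scale)
  moreover have "norm (e + (1 - \<alpha>) *\<^sub>R p) \<le> norm e + (1 - \<alpha>) * distortion A * (\<bar>k\<bar> * norm zq)"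
    using norm_triangle_ineq[of e "(1 - \<alpha>) *\<^sub>R p"] mult_left_mono[OF np, of "1 - \<alpha>"] \<alpha>
    by (simp add: mult.assoc)
  ultimately show ?thesis
    by auto
qed

lemma controlled_error_drift:
  fixes Z :: "nat \<Rightarrow> (real^'n) set" and E :: "nat \<Rightarrow> real^'n"
  assumes Z0: "subspace (Z 0)"
    and inv: "\<And>s. s < t \<Longrightarrow> invertible (\<theta> s)"
    and img: "\<And>s. s < t \<Longrightarrow> (\<lambda>v. \<theta> s *v v) ` Z s = Z (Suc s)"
    and step: "\<And>s. s < t \<Longrightarrow> E (Suc s) = \<theta> s *v (E s - (1 - \<alpha>) *\<^sub>R (E s - orth_proj (Z s) (E s)))"
    and E0: "E 0 = zp + zq" and zp: "zp \<in> Z 0" and zq: "\<And>w. w \<in> Z 0 \<Longrightarrow> zq \<bullet> w = 0"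
    and \<alpha>: "0 \<le> \<alpha>" "\<alpha> \<le> 1"
  shows "\<exists>e\<in>Z 0. E t = thbar \<theta> t *v (zp + \<alpha> ^ t *\<^sub>R zq + e)
           \<and> norm e \<le> (\<Sum>s<t. (1 - \<alpha>) * distortion (thbar \<theta> s) * \<alpha> ^ s) * norm zq"
  using inv img step
proof (induction t)
  case 0
  show ?case
    using E0 subspace_0[OF Z0] by (intro bexI[of _ 0]) simp_all
next
  case (Suc t)
  have "\<exists>e\<in>Z 0. E t = thbar \<theta> t *v (zp + \<alpha> ^ t *\<^sub>R zq + e)
           \<and> norm e \<le> (\<Sum>s<t. (1 - \<alpha>) * distortion (thbar \<theta> s) * \<alpha> ^ s) * norm zq"
    by (rule Suc.IH) (use Suc.prems in auto)
  then obtain e where "e \<in> Z 0" and Et: "E t = thbar \<theta> t *v (zp + \<alpha> ^ t *\<^sub>R zq + e)"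
      and e: "norm e \<le> (\<Sum>s<t. (1 - \<alpha>) * distortion (thbar \<theta> s) * \<alpha> ^ s) * norm zq"
    by blast
  have "Z t = (\<lambda>v. thbar \<theta> t *v v) ` Z 0"
    using Suc.prems(2) by (intro thbar_image) simp
  then obtain e' where "e' \<in> Z 0"
      and E': "E t - (1 - \<alpha>) *\<^sub>R (E t - orth_proj (Z t) (E t))
               = thbar \<theta> t *v (zp + (\<alpha> * \<alpha> ^ t) *\<^sub>R zq + e')"
      and e': "norm e' \<le> norm e + (1 - \<alpha>) * distortion (thbar \<theta> t) * (\<alpha> ^ t * norm zq)"
    using damped_projection_step[OF Z0 invertible_thbar[of t \<theta>] zp \<open>e \<in> Z 0\<close> zq \<alpha>(2), of "\<alpha> ^ t"]
      Suc.prems(1) \<alpha>(1) unfolding Et by auto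
  have "E (Suc t) = thbar \<theta> (Suc t) *v (zp + \<alpha> ^ Suc t *\<^sub>R zq + e')"
    using Suc.prems(3)[of t] E' by (simp add: matrix_vector_mul_assoc)
  moreover have "norm e' \<le> (\<Sum>s<Suc t. (1 - \<alpha>) * distortion (thbar \<theta> s) * \<alpha> ^ s) * norm zq"
    using e e' by (simp add: distrib_right mult.assoc)
  ultimately show ?case
    using \<open>e' \<in> Z 0\<close> by blast
qed

lemma controlled_error_step:
  assumes S: "subspace S" and "c > 0" and "x \<in> S"
  shows "(mat 1 - gainK c S) *v q - x = (q - x) - (1 / (1 + c)) *\<^sub>R ((q - x) - orth_proj S (q - x))"
proof -
  have "orth_proj S (q - x) = orth_proj S q - x"
    using linear_diff[OF linear_orth_proj[OF S]] orth_proj_id[OF S \<open>x \<in> S\<close>] by simp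
  then show ?thesis
    using gainK_mult_vector[OF S \<open>c > 0\<close>, of q] by (simp add: matrix_vector_mult_diff_rdistrib)
qed

lemma power2_norm_perturbed_le:
  fixes A :: "real^'n^'m"
  assumes "norm y \<le> norm z" and "norm e \<le> B"
  shows "(norm (A *v (y + e)))\<^sup>2 \<le> (specnorm A)\<^sup>2 * ((norm y)\<^sup>2 + B * (2 * norm z + B))"
proof -
  have "norm (A *v (y + e)) \<le> specnorm A * norm (y + e)"
    by (rule specnorm_mult_vector)
  also have "\<dots> \<le> specnorm A * (norm y + B)"
    using norm_triangle_ineq[of y e] assms(2) by (intro mult_left_mono specnorm_nonneg) simp
  finally have "(norm (A *v (y + e)))\<^sup>2 \<le> (specnorm A)\<^sup>2 * (norm y + B)\<^sup>2"
    by (metis norm_ge_zero power_mono power_mult_distrib)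
  also have "(norm y + B)\<^sup>2 \<le> (norm y)\<^sup>2 + B * (2 * norm z + B)"
    using assms mult_left_mono[OF assms(1), of "2 * B"] norm_ge_zero[of e]
    by (simp add: power2_sum power2_eq_square algebra_simps)
  finally show ?thesis
    by (simp add: mult_left_mono)
qed

lemma power2_norm_add_scaleR_orthogonal:
  "a \<bullet> b = 0 \<Longrightarrow> (norm (a + k *\<^sub>R b))\<^sup>2 = (norm a)\<^sup>2 + k\<^sup>2 * (norm b)\<^sup>2"
  using norm_add_Pythagorean[of a "k *\<^sub>R b"] by (simp add: orthogonal_def power_mult_distrib)

lemma power2_norm_decomposition_le:
  fixes A :: "real^'n^'m"
  assumes "zp \<bullet> zq = 0" and "norm e \<le> G * D * norm zq" and "0 \<le> G" "0 \<le> D" and "\<bar>k\<bar> \<le> 1"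
  shows "(norm (A *v (zp + k *\<^sub>R zq + e)))\<^sup>2
    \<le> (specnorm A)\<^sup>2 * (k\<^sup>2 * (norm zq)\<^sup>2 + (norm zp)\<^sup>2 + G * (norm (zp + zq))\<^sup>2 * (G * D\<^sup>2 + 2 * D))"
proof -
  note pythagoras = power2_norm_add_scaleR_orthogonal[OF assms(1)]
  have "k\<^sup>2 * (norm zq)\<^sup>2 \<le> 1 * (norm zq)\<^sup>2"
    using assms(5) by (intro mult_right_mono) (simp_all add: abs_square_le_1)
  then have "(norm (zp + k *\<^sub>R zq))\<^sup>2 \<le> (norm (zp + zq))\<^sup>2"
    using pythagoras[of k] pythagoras[of 1] by simp
  then have "norm (zp + k *\<^sub>R zq) \<le> norm (zp + zq)"
    by (rule power2_le_imp_le) simp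
  moreover have "norm e \<le> G * D * norm (zp + zq)"
  proof -
    have "(norm zq)\<^sup>2 \<le> (norm (zp + zq))\<^sup>2"
      using pythagoras[of 1] by simp
    then have "norm zq \<le> norm (zp + zq)"
      by (rule power2_le_imp_le) simp
    then have "G * D * norm zq \<le> G * D * norm (zp + zq)"
      using assms(3,4) by (simp add: mult_left_mono)
    then show ?thesis
      using assms(2) by linarith
  qed
  ultimately have "(norm (A *v (zp + k *\<^sub>R zq + e)))\<^sup>2 \<le> (specnorm A)\<^sup>2 *
      ((norm (zp + k *\<^sub>R zq))\<^sup>2 + G * D * norm (zp + zq) * (2 * norm (zp + zq) + G * D * norm (zp + zq)))"
    by (rule power2_norm_perturbed_le)
  also have "(norm (zp + k *\<^sub>R zq))\<^sup>2 + G * D * norm (zp + zq) * (2 * norm (zp + zq) + G * D * norm (zp + zq))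
      = k\<^sup>2 * (norm zq)\<^sup>2 + (norm zp)\<^sup>2 + G * (norm (zp + zq))\<^sup>2 * (G * D\<^sup>2 + 2 * D)"
    unfolding pythagoras by (simp add: power2_eq_square algebra_simps)
  finally show ?thesis .
qed

locale controlled_linear_system =
  fixes Z :: "nat \<Rightarrow> (real^'n) set" and \<theta> :: "nat \<Rightarrow> real^'n^'n"
    and x q :: "nat \<Rightarrow> real^'n" and z :: "real^'n" and T :: nat and c \<alpha> :: real
  assumes subspace_Z0: "subspace (Z 0)"
    and c_pos: "c > 0" and alpha_def: "\<alpha> = c / (1 + c)"
    and theta_inv: "\<And>t. t < T \<Longrightarrow> invertible (\<theta> t)"
    and theta_Z: "\<And>t. t < T \<Longrightarrow> (\<lambda>v. \<theta> t *v v) ` Z t = Z (Suc t)"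
    and x0: "x 0 \<in> Z 0" and x_step: "\<And>t. t < T \<Longrightarrow> x (Suc t) = \<theta> t *v x t"
    and q0: "q 0 = x 0 + z"
    and q_step: "\<And>t. t < T \<Longrightarrow> q (Suc t) = \<theta> t *v ((mat 1 - gainK c (Z t)) *v q t)"
begin

definition zpar :: "real^'n" where "zpar = projP (Z 0) *v z"

definition zperp :: "real^'n" where "zperp = z - zpar"

lemma alpha_nonneg: "0 \<le> \<alpha>" and alpha_le_one: "\<alpha> \<le> 1"
  using c_pos by (simp_all add: alpha_def)

lemma inner_zpar_zperp: "zpar \<bullet> zperp = 0"
  using orth_proj_orthogonal[OF subspace_Z0 orth_proj_in[OF subspace_Z0]]
  by (simp add: zpar_def zperp_def projP_mult_vector[OF subspace_Z0] inner_commute)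

lemma error_representation:
  assumes "t \<le> T"
  shows "\<exists>e\<in>Z 0. q t - x t = thbar \<theta> t *v (zpar + \<alpha> ^ t *\<^sub>R zperp + e)
           \<and> norm e \<le> (\<Sum>s<t. (1 - \<alpha>) * distortion (thbar \<theta> s) * \<alpha> ^ s) * norm zperp"
  unfolding zperp_def zpar_def projP_mult_vector[OF subspace_Z0]
proof (rule controlled_error_drift[where Z = Z and \<theta> = \<theta>, OF subspace_Z0])
  fix s assume "s < t"
  then have "s < T"
    using assms by simp
  have "Z s = (\<lambda>v. thbar \<theta> s *v v) ` Z 0"
    by (rule thbar_image, rule theta_Z) (use \<open>s < T\<close> in simp)
  moreover have "x s = thbar \<theta> s *v x 0"
    by (rule thbar_trajectory, rule x_step) (use \<open>s < T\<close> in simp)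
  ultimately have "subspace (Z s)" and "x s \<in> Z s"
    using subspace_Z0 x0 by (auto intro: linear_subspace_image simp: matrix_vector_mul_linear)
  moreover have "1 / (1 + c) = 1 - \<alpha>"
    using c_pos by (simp add: alpha_def field_simps)
  moreover have "q (Suc s) - x (Suc s) = \<theta> s *v ((mat 1 - gainK c (Z s)) *v q s - x s)"
    using \<open>s < T\<close> by (simp add: q_step x_step matrix_vector_mult_diff_distrib)
  ultimately show "q (Suc s) - x (Suc s) = \<theta> s *v ((q s - x s)
      - (1 - \<alpha>) *\<^sub>R ((q s - x s) - orth_proj (Z s) (q s - x s)))"
    by (simp only: controlled_error_step[OF _ c_pos])
qed (use assms q0 theta_inv theta_Z alpha_nonneg alpha_le_one orth_proj_in[OF subspace_Z0]
       orth_proj_orthogonal[OF subspace_Z0] in auto)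

lemma error_bound:
  assumes "1 \<le> t" and "t \<le> T"
  shows "(norm (q t - x t))\<^sup>2 \<le> (specnorm (thbar \<theta> t))\<^sup>2 *
           (\<alpha> ^ (2 * t) * (norm zperp)\<^sup>2 + (norm zpar)\<^sup>2
            + gamma \<theta> t * (norm z)\<^sup>2 * (gamma \<theta> t * \<alpha>\<^sup>2 * (1 - \<alpha> ^ (t - 1))\<^sup>2 + 2 * (\<alpha> - \<alpha> ^ t)))"
proof -
  define D where "D = \<alpha> * (1 - \<alpha> ^ (t - 1))"
  have "0 \<le> D"
    using alpha_nonneg alpha_le_one by (simp add: D_def power_le_one)
  have "\<alpha> - \<alpha> ^ t = D"
    using assms(1) by (simp add: D_def algebra_simps flip: power_Suc)
  obtain e where qx: "q t - x t = thbar \<theta> t *v (zpar + \<alpha> ^ t *\<^sub>R zperp + e)"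
      and e: "norm e \<le> (\<Sum>s<t. (1 - \<alpha>) * distortion (thbar \<theta> s) * \<alpha> ^ s) * norm zperp"
    using error_representation[OF assms(2)] by blast
  note e
  also have "\<dots> \<le> gamma \<theta> t * \<alpha> * (1 - \<alpha> ^ (t - 1)) * norm zperp"
    by (rule mult_right_mono[OF drift_sum_le_gamma[OF alpha_nonneg alpha_le_one] norm_ge_zero])
  finally have e': "norm e \<le> gamma \<theta> t * D * norm zperp"
    by (simp add: D_def mult.assoc)
  have "0 \<le> gamma \<theta> t"
    using order_trans[OF distortion_nonneg distortion_thbar_le_gamma[OF le0]] .
  moreover have "\<bar>\<alpha> ^ t\<bar> \<le> 1"
    using alpha_nonneg alpha_le_one by (simp add: power_le_one)
  ultimately have "(norm (q t - x t))\<^sup>2 \<le> (specnorm (thbar \<theta> t))\<^sup>2 * ((\<alpha> ^ t)\<^sup>2 * (norm zperp)\<^sup>2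
      + (norm zpar)\<^sup>2 + gamma \<theta> t * (norm (zpar + zperp))\<^sup>2 * (gamma \<theta> t * D\<^sup>2 + 2 * D))"
    unfolding qx using power2_norm_decomposition_le[OF inner_zpar_zperp e' _ \<open>0 \<le> D\<close>] by blast
  then show ?thesis
    unfolding \<open>\<alpha> - \<alpha> ^ t = D\<close> by (simp add: D_def zperp_def power_mult_distrib mult_ac flip: power_mult)
qed

lemma error_eq_if_orthogonal:
  assumes "\<And>s. s < T \<Longrightarrow> orthogonal_matrix (\<theta> s)" and "t \<le> T"
  shows "(norm (q t - x t))\<^sup>2 = \<alpha> ^ (2 * t) * (norm zperp)\<^sup>2 + (norm zpar)\<^sup>2"
proof -
  have orth: "orthogonal_matrix (thbar \<theta> s)" if "s \<le> t" for s
    using assms that by (intro orthogonal_matrix_thbar) simp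
  then have "(\<Sum>s<t. (1 - \<alpha>) * distortion (thbar \<theta> s) * \<alpha> ^ s) = 0"
    by (simp add: distortion_orthogonal)
  with error_representation[OF assms(2)]
  have "q t - x t = thbar \<theta> t *v (zpar + \<alpha> ^ t *\<^sub>R zperp)"
    by auto
  then show ?thesis
    using power2_norm_add_scaleR_orthogonal[OF inner_zpar_zperp]
    by (simp add: power2_norm_orthogonal_matrix[OF orth] mult.commute flip: power_mult)
qed

end

theorem theorem1:
  fixes Z :: "nat \<Rightarrow> (real^'n) set"
    and \<theta> :: "nat \<Rightarrow> real^'n^'n"
    and x q :: "nat \<Rightarrow> real^'n"
    and z :: "real^'n"
    and r T :: nat and c \<alpha> :: real
  assumes r_bounds: "1 \<le> r" "r \<le> CARD('n)"
    and T_pos: "1 \<le> T"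
    and c_pos: "c > 0"
    and alpha_def: "\<alpha> = c / (1 + c)"
    and Z_sub: "\<And>t. t \<le> T \<Longrightarrow> subspace (Z t) \<and> dim (Z t) = r"
    and theta_inv: "\<And>t. t < T \<Longrightarrow> invertible (\<theta> t)"
    and theta_Z: "\<And>t. t < T \<Longrightarrow> (\<lambda>v. \<theta> t *v v) ` Z t = Z (Suc t)"
    and x0: "x 0 \<in> Z 0"
    and x_step: "\<And>t. t < T \<Longrightarrow> x (Suc t) = \<theta> t *v x t"
    and q0: "q 0 = x 0 + z"
    and q_step: "\<And>t. t < T \<Longrightarrow> q (Suc t) = \<theta> t *v ((mat 1 - gainK c (Z t)) *v q t)"
  shows "(\<forall>t. 1 \<le> t \<and> t \<le> T \<longrightarrow>
            (norm (q t - x t))\<^sup>2 \<le> (specnorm (thbar \<theta> t))\<^sup>2 *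
              (\<alpha> ^ (2 * t) * (norm (z - projP (Z 0) *v z))\<^sup>2 + (norm (projP (Z 0) *v z))\<^sup>2
               + gamma \<theta> t * (norm z)\<^sup>2 *
                 (gamma \<theta> t * \<alpha>\<^sup>2 * (1 - \<alpha> ^ (t - 1))\<^sup>2 + 2 * (\<alpha> - \<alpha> ^ t))))
       \<and> ((\<forall>t < T. orthogonal_matrix (\<theta> t)) \<longrightarrow>
          (\<forall>t. 1 \<le> t \<and> t \<le> T \<longrightarrow>
            (norm (q t - x t))\<^sup>2 = \<alpha> ^ (2 * t) * (norm (z - projP (Z 0) *v z))\<^sup>2
                                  + (norm (projP (Z 0) *v z))\<^sup>2))"
proof -
  \<comment> \<open>Only subspace (Z 0) is needed, the other Z t being its images; neither r nor T \<ge> 1 matters.\<close>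
  interpret controlled_linear_system Z \<theta> x q z T c \<alpha>
    using Z_sub[of 0] c_pos alpha_def theta_inv theta_Z x0 x_step q0 q_step
    by unfold_locales simp_all
  show ?thesis
    using error_bound error_eq_if_orthogonal unfolding zperp_def zpar_def by auto
qed

end
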